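(* Let $n\ge 2$, let $P_n$ be the path with vertices $x_1,\dots,x_n$ and edges $\{x_i,x_{i+1}\}$, let $\mathcal C$ be a maximal independent set of $P_n$ with $c:=|\mathcal C|$, and let $G$ be the $\mathcal C$-suspension of $P_n$. Let $\alpha:=\lceil n/2\rceil$, $\delta_0=0$ if $x_1\in\mathcal C$ and $1$ otherwise, $\delta_t=0$ if $x_n\in\mathcal C$ and $1$ otherwise, and $\delta:=\delta_0+\delta_t$. Then $G$ is pseudo-Gorenstein$^{*}$ if and only if one of the following holds: (a) $n\equiv 0,2,9,11\pmod{12}$ and $c+\delta\le\alpha$; (b) $n\equiv 3,5,6,8\pmod{12}$ and $c+\delta=\alpha+1$; (c) $n\equiv 1,4\pmod{12}$ and $\mathcal C=\{x_1,x_4,\dots,x_n\}$.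
   Context: For $\varnothing\ne C\subseteq V(G)$, the $C$-suspension of $G$ is obtained by adding a new vertex $z$ adjacent exactly to the vertices of $C$. For a finite simple graph $G$ on vertex set $[N]$, let $S=K[y_1,\dots,y_N]$ ($K$ a field) and $I(G)$ the edge ideal generated by $y_iy_j$, $\{i,j\}\in E(G)$. Let $\alpha(G)$ be the independence number (equal to $\dim S/I(G)$). Write the Hilbert series of $S/I(G)$ uniquely as $(h_0+\dots+h_st^s)/(1-t)^{\alpha(G)}$ with $h_s\ne 0$, and $\mathfrak a(G)=s-\alpha(G)$. $G$ is pseudo-Gorenstein$^{*}$ if $h_s=1$ and $\mathfrak a(G)=0$. *)

theory Defs
  imports "HOL-Library.Multiset" "HOL-Computational_Algebra.Polynomial_FPS"
begin

text \<open>A finite simple graph is given by a vertex set V and an edge set E of 2-element subsets of V.\<close>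

definition independent :: "'a set \<Rightarrow> 'a set set \<Rightarrow> 'a set \<Rightarrow> bool" where
  "independent V E S \<longleftrightarrow> S \<subseteq> V \<and> (\<forall>e\<in>E. \<not> e \<subseteq> S)"

definition maximal_independent :: "'a set \<Rightarrow> 'a set set \<Rightarrow> 'a set \<Rightarrow> bool" where
  "maximal_independent V E C \<longleftrightarrow> independent V E C \<and>
     (\<forall>S. independent V E S \<and> C \<subseteq> S \<longrightarrow> S = C)"

definition indep_number :: "'a set \<Rightarrow> 'a set set \<Rightarrow> nat" where
  "indep_number V E = Max (card ` {S. independent V E S})"

definition path_V :: "nat \<Rightarrow> nat set" where
  "path_V n = {1..n}"

definition path_E :: "nat \<Rightarrow> nat set set" where
  "path_E n = {{i, i + 1} | i. 1 \<le> i \<and> i < n}"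

text \<open>C-suspension: old vertices are Some v, the new vertex z is None.\<close>
definition susp_V :: "'a set \<Rightarrow> 'a option set" where
  "susp_V V = insert None (Some ` V)"

definition susp_E :: "'a set set \<Rightarrow> 'a set \<Rightarrow> 'a option set set" where
  "susp_E E C = (\<lambda>e. Some ` e) ` E \<union> {{None, Some c} | c. c \<in> C}"

text \<open>Hilbert function of S/I(G): dimension of the degree-d part, i.e. the number of
  monomials (multisets of variables) of degree d not lying in the monomial ideal I(G),
  i.e. whose support contains no edge.\<close>
definition hilbert_fun :: "'a set \<Rightarrow> 'a set set \<Rightarrow> nat \<Rightarrow> nat" where
  "hilbert_fun V E d = card {M :: 'a multiset. set_mset M \<subseteq> V \<and> size M = d \<and>
       (\<forall>e\<in>E. \<not> e \<subseteq> set_mset M)}"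

definition hilbert_series :: "'a set \<Rightarrow> 'a set set \<Rightarrow> int fps" where
  "hilbert_series V E = Abs_fps (\<lambda>d. int (hilbert_fun V E d))"

definition h_poly :: "'a set \<Rightarrow> 'a set set \<Rightarrow> int poly" where
  "h_poly V E = (THE p. fps_of_poly p = hilbert_series V E * (1 - fps_X) ^ indep_number V E)"

definition a_invariant :: "'a set \<Rightarrow> 'a set set \<Rightarrow> int" where
  "a_invariant V E = int (degree (h_poly V E)) - int (indep_number V E)"

definition pseudo_gorenstein_star :: "'a set \<Rightarrow> 'a set set \<Rightarrow> bool" where
  "pseudo_gorenstein_star V E \<longleftrightarrow> lead_coeff (h_poly V E) = 1 \<and> a_invariant V E = 0"

end

theory Submission
  imports Defs
begin

text \<open>
  The edge ideal is generated by squarefree monomials, so the monomials outside it are exactly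
  those whose support is an independent set, and the Hilbert series is the sum of
  t^|F| / (1 - t)^|F| over the independent sets F. Hence the h-polynomial has degree at most
  alpha(G), and its coefficient of t^alpha(G) is (-1)^alpha(G) I(G; -1), where I(G; x) is the
  independence polynomial: G is pseudo-Gorenstein* iff (-1)^alpha(G) I(G; -1) = 1.

  Deleting the cone vertex z gives I(G; x) = I(P_n; x) + x I(P_n - C; x) and
  alpha(G) = max (alpha(P_n)) (1 + alpha(P_n - C)). Deleting end vertices of paths shows
  alpha(P_n) = ceil(n/2) and that I(P_n; -1) has period 6. Since C is maximal independent,
  P_n - C is a disjoint union of c + delta - 1 paths with one or two vertices, so
  alpha(P_n - C) = c + delta - 1, and I(P_n - C; -1) vanishes unless every piece is an edge,
  which happens exactly for C = {x_1, x_4, ..., x_n}. Comparing signs modulo 12 leaves the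
  conditions (a)-(c).
\<close>

section \<open>Hilbert series of edge ideals\<close>

definition support_series :: "'a set \<Rightarrow> int fps" where
  "support_series F = Abs_fps (\<lambda>k. int (card {M. set_mset M = F \<and> size M = k}))"

lemma finite_multisets_with_support:
  "finite F \<Longrightarrow> finite {M :: 'a multiset. set_mset M = F \<and> size M = k}"
  by (rule finite_subset[OF _ finite_multisets_of_size[of F k]]) (auto simp: multisets_of_size_def)

lemma multisets_with_support_insert:
  assumes "a \<notin> F"
  shows "{M. set_mset M = insert a F \<and> size M = Suc k} =
    add_mset a ` ({M. set_mset M = insert a F \<and> size M = k} \<union> {M. set_mset M = F \<and> size M = k})"
proof (intro equalityI subsetI)
  fix M assume M: "M \<in> {M. set_mset M = insert a F \<and> size M = Suc k}"
  then have M_eq: "add_mset a (M - {#a#}) = M" by auto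
  from M_eq have "set_mset M = insert a (set_mset (M - {#a#}))"
    by (metis set_mset_add_mset_insert)
  then have "insert a (set_mset (M - {#a#})) = insert a F"
    using M by simp
  then have "set_mset (M - {#a#}) = insert a F \<or> set_mset (M - {#a#}) = F"
    using assms by (metis insert_absorb insert_ident)
  moreover from M_eq have "size M = Suc (size (M - {#a#}))"
    by (metis size_add_mset)
  then have "size (M - {#a#}) = k" using M by simp
  ultimately show "M \<in> add_mset a ` ({M. set_mset M = insert a F \<and> size M = k} \<union> {M. set_mset M = F \<and> size M = k})"
    by (intro rev_image_eqI[of "M - {#a#}"]) (use M_eq in auto)
next
  fix M assume "M \<in> add_mset a ` ({M. set_mset M = insert a F \<and> size M = k} \<union> {M. set_mset M = F \<and> size M = k})"
  then obtain N where "M = add_mset a N"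
    and "set_mset N = insert a F \<or> set_mset N = F" and "size N = k"
    by blast
  then show "M \<in> {M. set_mset M = insert a F \<and> size M = Suc k}" by auto
qed

lemma support_series_insert:
  assumes "finite F" "a \<notin> F"
  shows "support_series (insert a F) * (1 - fps_X) = fps_X * support_series F"
proof (rule fps_ext)
  fix k
  show "fps_nth (support_series (insert a F) * (1 - fps_X)) k = fps_nth (fps_X * support_series F) k"
  proof (cases k)
    case 0
    then have "{M. set_mset M = insert a F \<and> size M = k} = {}" by auto
    then show ?thesis using 0 by (simp add: support_series_def)
  next
    case (Suc j)
    let ?S = "\<lambda>F k. {M :: 'a multiset. set_mset M = F \<and> size M = k}"
    have "card (?S (insert a F) (Suc j)) = card (?S (insert a F) j \<union> ?S F j)"
      unfolding multisets_with_support_insert[OF assms(2)] by (rule card_image) (auto simp: inj_on_def)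
    also have "\<dots> = card (?S (insert a F) j) + card (?S F j)"
      using assms by (intro card_Un_disjoint finite_multisets_with_support) auto
    finally show ?thesis using Suc by (simp add: support_series_def algebra_simps)
  qed
qed

lemma support_series_mult_power:
  "finite F \<Longrightarrow> support_series F * (1 - fps_X) ^ card F = fps_X ^ card F"
proof (induction F rule: finite_induct)
  case empty
  have "{M :: 'a multiset. set_mset M = {} \<and> size M = k} = (if k = 0 then {{#}} else {})" for k
    by auto
  then show ?case by (intro fps_ext) (simp add: support_series_def)
next
  case (insert a F)
  have "support_series (insert a F) * (1 - fps_X) ^ card (insert a F) =
      (support_series (insert a F) * (1 - fps_X)) * (1 - fps_X) ^ card F"
    using insert by (simp add: mult_ac)
  also have "\<dots> = fps_X * (support_series F * (1 - fps_X) ^ card F)"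
    unfolding support_series_insert[OF insert(1,2)] by (simp add: mult.assoc)
  also have "\<dots> = fps_X ^ card (insert a F)"
    using insert by simp
  finally show ?case .
qed

lemma finite_independent_sets: "finite V \<Longrightarrow> finite {S. independent V E S}"
  by (rule finite_subset[of _ "Pow V"]) (auto simp: independent_def)

lemma hilbert_series_eq_sum_support_series:
  assumes "finite V"
  shows "hilbert_series V E = (\<Sum>F | independent V E F. support_series F)"
proof (rule fps_ext)
  fix k
  have "{M. set_mset M \<subseteq> V \<and> size M = k \<and> (\<forall>e\<in>E. \<not> e \<subseteq> set_mset M)} =
      (\<Union>F\<in>{S. independent V E S}. {M. set_mset M = F \<and> size M = k})"
    by (auto simp: independent_def)
  then have "hilbert_fun V E k = card (\<Union>F\<in>{S. independent V E S}. {M. set_mset M = F \<and> size M = k})"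
    unfolding hilbert_fun_def by simp
  also have "\<dots> = (\<Sum>F | independent V E F. card {M. set_mset M = F \<and> size M = k})"
    by (rule card_UN_disjoint)
      (auto simp: finite_independent_sets assms independent_def
        intro!: finite_multisets_with_support dest: finite_subset)
  finally have "hilbert_fun V E k = (\<Sum>F | independent V E F. card {M. set_mset M = F \<and> size M = k})" .
  then show "fps_nth (hilbert_series V E) k = fps_nth (\<Sum>F | independent V E F. support_series F) k"
    by (simp add: hilbert_series_def fps_sum_nth support_series_def)
qed

lemma card_le_indep_number:
  "finite V \<Longrightarrow> independent V E S \<Longrightarrow> card S \<le> indep_number V E"
  unfolding indep_number_def by (rule Max_ge) (auto intro: finite_independent_sets)

lemma h_poly_eq_sum:
  assumes "finite V"
  shows "h_poly V E =
    (\<Sum>F | independent V E F. monom 1 (card F) * [:1, -1:] ^ (indep_number V E - card F))"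
    (is "_ = ?h")
proof -
  let ?\<alpha> = "indep_number V E"
  have one_minus_X: "fps_of_poly [:1, -1:] = (1 - fps_X :: int fps)"
    by (rule fps_ext) (auto simp: coeff_pCons fps_X_def split: nat.split)
  have "hilbert_series V E * (1 - fps_X) ^ ?\<alpha> =
      (\<Sum>F | independent V E F. support_series F * (1 - fps_X) ^ card F * (1 - fps_X) ^ (?\<alpha> - card F))"
    unfolding hilbert_series_eq_sum_support_series[OF assms] sum_distrib_right
    by (intro sum.cong refl) (simp add: mult.assoc card_le_indep_number assms flip: power_add)
  also have "\<dots> = (\<Sum>F | independent V E F. fps_X ^ card F * (1 - fps_X) ^ (?\<alpha> - card F))"
    by (intro sum.cong refl)
      (simp add: support_series_mult_power independent_def finite_subset[OF _ assms])
  also have "\<dots> = fps_of_poly ?h"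
    by (simp add: fps_of_poly_sum fps_of_poly_mult fps_of_poly_power fps_of_poly_monom' one_minus_X)
  finally have h: "fps_of_poly ?h = hilbert_series V E * (1 - fps_X) ^ ?\<alpha>" ..
  show ?thesis
    unfolding h_poly_def
  proof (rule the_equality)
    fix p assume "fps_of_poly p = hilbert_series V E * (1 - fps_X) ^ ?\<alpha>"
    with h show "p = ?h" by (simp flip: fps_of_poly_eq_iff)
  qed (rule h)
qed

lemma degree_h_poly_le:
  assumes "finite V"
  shows "degree (h_poly V E) \<le> indep_number V E"
  unfolding h_poly_eq_sum[OF assms]
proof (rule degree_sum_le)
  fix F assume "F \<in> {S. independent V E S}"
  then have "card F \<le> indep_number V E" using assms card_le_indep_number by blast
  then show "degree (monom (1::int) (card F) * [:1, -1:] ^ (indep_number V E - card F)) \<le> indep_number V E"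
    using degree_mult_le[of "monom (1::int) (card F)" "[:1, -1:] ^ (indep_number V E - card F)"]
      degree_power_le[of "[:1, -1::int:]" "indep_number V E - card F"]
    by (simp add: degree_monom_eq)
qed (simp add: assms finite_independent_sets)

definition indep_poly :: "'a set \<Rightarrow> 'a set set \<Rightarrow> 'b::comm_ring_1 \<Rightarrow> 'b" where
  "indep_poly V E x = (\<Sum>S | independent V E S. x ^ card S)"

lemma coeff_h_poly_indep_number:
  assumes "finite V"
  shows "coeff (h_poly V E) (indep_number V E) = (-1) ^ indep_number V E * indep_poly V E (-1)"
proof -
  let ?\<alpha> = "indep_number V E"
  have "coeff (monom 1 (card F) * [:1, -1:] ^ (?\<alpha> - card F)) ?\<alpha> = (-1) ^ ?\<alpha> * (-1::int) ^ card F"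
    if "independent V E F" for F
  proof -
    have le: "card F \<le> ?\<alpha>" using that assms by (rule card_le_indep_number[rotated])
    have "coeff (monom 1 (card F) * [:1, -1:] ^ (?\<alpha> - card F)) ?\<alpha> =
        lead_coeff ([:1, -1::int:] ^ (?\<alpha> - card F))"
      using le by (simp add: coeff_monom_mult degree_power_eq)
    also have "\<dots> = (-1) ^ (?\<alpha> + card F)"
      using le by (simp add: lead_coeff_power neg_one_power_add_eq_neg_one_power_diff)
    finally show ?thesis by (simp add: power_add)
  qed
  then have "coeff (h_poly V E) ?\<alpha> = (\<Sum>F | independent V E F. (-1) ^ ?\<alpha> * (-1) ^ card F)"
    unfolding h_poly_eq_sum[OF assms] coeff_sum by (intro sum.cong) simp_all
  then show ?thesis
    by (simp add: indep_poly_def sum_distrib_left)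
qed

lemma pseudo_gorenstein_star_iff:
  assumes "finite V"
  shows "pseudo_gorenstein_star V E \<longleftrightarrow> (-1) ^ indep_number V E * indep_poly V E (-1 :: int) = 1"
proof -
  let ?h = "h_poly V E" and ?\<alpha> = "indep_number V E"
  have "pseudo_gorenstein_star V E \<longleftrightarrow> lead_coeff ?h = 1 \<and> degree ?h = ?\<alpha>"
    unfolding pseudo_gorenstein_star_def a_invariant_def by linarith
  also have "\<dots> \<longleftrightarrow> coeff ?h ?\<alpha> = 1"
    using degree_h_poly_le[OF assms, of E] le_degree[of ?h ?\<alpha>] by fastforce
  finally show ?thesis by (simp add: coeff_h_poly_indep_number assms)
qed

section \<open>Deleting a vertex\<close>

lemma independent_insert_iff:
  assumes "\<forall>e\<in>E. card e = 2" "v \<notin> S"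
  shows "independent V E (insert v S) \<longleftrightarrow> v \<in> V \<and> independent (V - insert v {u. {v, u} \<in> E}) E S"
proof -
  have "(\<forall>e\<in>E. \<not> e \<subseteq> insert v S) \<longleftrightarrow> (\<forall>e\<in>E. \<not> e \<subseteq> S) \<and> (\<forall>u\<in>S. {v, u} \<notin> E)"
  proof (intro iffI conjI ballI)
    fix e assume "\<forall>e\<in>E. \<not> e \<subseteq> insert v S" "e \<in> E"
    then have "\<not> e \<subseteq> insert v S" by blast
    then show "\<not> e \<subseteq> S" using subset_insertI2[of e S v] by blast
  next
    fix u assume "\<forall>e\<in>E. \<not> e \<subseteq> insert v S" "u \<in> S"
    moreover from \<open>u \<in> S\<close> have "{v, u} \<subseteq> insert v S" by simp
    ultimately show "{v, u} \<notin> E" by blast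
  next
    fix e assume no_edge: "(\<forall>e\<in>E. \<not> e \<subseteq> S) \<and> (\<forall>u\<in>S. {v, u} \<notin> E)" and "e \<in> E"
    then have "card e = 2" using assms(1) by blast
    then obtain x y where xy: "e = {x, y}" "x \<noteq> y" unfolding card_2_iff by blast
    show "\<not> e \<subseteq> insert v S"
    proof
      assume sub: "e \<subseteq> insert v S"
      have "\<not> e \<subseteq> S" using no_edge \<open>e \<in> E\<close> by blast
      then have "v \<in> e" using sub by blast
      define u where "u = (if x = v then y else x)"
      have e: "e = {v, u}" "u \<noteq> v" using xy \<open>v \<in> e\<close> by (auto simp: u_def)
      then have "u \<in> S" using sub by blast
      then show False using no_edge \<open>e \<in> E\<close> e(1) by blast
    qed
  qed
  then show ?thesis using assms(2) by (auto simp: independent_def)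
qed

lemma independent_delete_iff: "independent (V - {v}) E S \<longleftrightarrow> independent V E S \<and> v \<notin> S"
  by (auto simp: independent_def)

lemma independent_sets_delete_vertex:
  assumes "\<forall>e\<in>E. card e = 2" "v \<in> V"
  shows "{S. independent V E S} = {S. independent (V - {v}) E S} \<union>
    insert v ` {S. independent (V - insert v {u. {v, u} \<in> E}) E S}"
    (is "_ = ?A \<union> insert v ` ?B")
proof (intro equalityI subsetI)
  fix S assume "S \<in> {S. independent V E S}"
  then have S: "independent V E S" by simp
  show "S \<in> ?A \<union> insert v ` ?B"
  proof (cases "v \<in> S")
    case True
    then have S_eq: "insert v (S - {v}) = S" by (simp add: insert_absorb)
    then have "S - {v} \<in> ?B"
      using S independent_insert_iff[OF assms(1), of v "S - {v}" V] by simp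
    then have "insert v (S - {v}) \<in> insert v ` ?B" by (rule imageI)
    then show ?thesis unfolding S_eq ..
  next
    case False
    then show ?thesis using S by (simp add: independent_delete_iff)
  qed
next
  fix S assume "S \<in> ?A \<union> insert v ` ?B"
  then show "S \<in> {S. independent V E S}"
  proof
    assume "S \<in> ?A"
    then show ?thesis by (simp add: independent_delete_iff)
  next
    assume "S \<in> insert v ` ?B"
    then obtain T where "S = insert v T" "T \<in> ?B" by (rule imageE)
    moreover from this have "v \<notin> T" by (auto simp: independent_def)
    ultimately show ?thesis using independent_insert_iff[OF assms(1), of v T V] assms(2) by simp
  qed
qed

lemma indep_poly_delete_vertex:
  assumes "finite V" "\<forall>e\<in>E. card e = 2" "v \<in> V"
  shows "indep_poly V E x =
    indep_poly (V - {v}) E x + x * indep_poly (V - insert v {u. {v, u} \<in> E}) E x"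
proof -
  let ?A = "{S. independent (V - {v}) E S}" and ?B = "{S. independent (V - insert v {u. {v, u} \<in> E}) E S}"
  have fin: "finite ?A" "finite ?B" using assms(1) by (simp_all add: finite_independent_sets)
  have B: "S \<in> ?B \<Longrightarrow> finite S \<and> v \<notin> S" for S
    using assms(1) by (auto simp: independent_def dest: finite_subset)
  have sum_split: "indep_poly V E x = (\<Sum>S\<in>?A. x ^ card S) + (\<Sum>S\<in>insert v ` ?B. x ^ card S)"
    unfolding indep_poly_def independent_sets_delete_vertex[OF assms(2,3)]
  proof (rule sum.union_disjoint)
    show "finite ?A" "finite (insert v ` ?B)" using fin by simp_all
    show "?A \<inter> insert v ` ?B = {}" by (auto simp: independent_def)
  qed
  have "inj_on (insert v) ?B"
  proof (rule inj_onI)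
    fix S T assume "S \<in> ?B" "T \<in> ?B" "insert v S = insert v T"
    moreover have "v \<notin> S" "v \<notin> T" using B \<open>S \<in> ?B\<close> \<open>T \<in> ?B\<close> by blast+
    ultimately show "S = T" by (simp add: insert_ident)
  qed
  then have "(\<Sum>S\<in>insert v ` ?B. x ^ card S) = (\<Sum>S\<in>?B. x ^ card (insert v S))"
    by (simp add: sum.reindex)
  also have "\<dots> = x * (\<Sum>S\<in>?B. x ^ card S)"
    by (simp add: sum_distrib_left B)
  finally have "(\<Sum>S\<in>insert v ` ?B. x ^ card S) = x * (\<Sum>S\<in>?B. x ^ card S)" .
  with sum_split show ?thesis by (simp add: indep_poly_def)
qed

lemma independent_empty: "{} \<notin> E \<Longrightarrow> independent V E {}"
  by (auto simp: independent_def)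

lemma independent_set_sizes_finite_nonempty:
  assumes "finite V" "{} \<notin> E"
  shows "finite (card ` {S. independent V E S})" "card ` {S. independent V E S} \<noteq> {}"
proof -
  have "{} \<in> {S. independent V E S}" using assms(2) by (simp add: independent_empty)
  then show "card ` {S. independent V E S} \<noteq> {}" by blast
qed (simp add: assms(1) finite_independent_sets)

lemma indep_poly_empty: "{} \<notin> E \<Longrightarrow> indep_poly {} E x = 1"
proof -
  assume "{} \<notin> E"
  then have "{S. independent {} E S} = {{}}" by (auto simp: independent_def)
  then show ?thesis by (simp add: indep_poly_def)
qed

lemma indep_number_empty: "{} \<notin> E \<Longrightarrow> indep_number {} E = 0"
proof -
  assume "{} \<notin> E"
  then have "{S. independent {} E S} = {{}}" by (auto simp: independent_def)
  then show ?thesis by (simp add: indep_number_def)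
qed

lemma indep_number_delete_vertex:
  assumes "finite V" "\<forall>e\<in>E. card e = 2" "v \<in> V"
  shows "indep_number V E =
    max (indep_number (V - {v}) E) (Suc (indep_number (V - insert v {u. {v, u} \<in> E}) E))"
proof -
  let ?A = "{S. independent (V - {v}) E S}" and ?B = "{S. independent (V - insert v {u. {v, u} \<in> E}) E S}"
  have "{} \<notin> E" using assms(2) by fastforce
  then have A: "finite (card ` ?A)" "card ` ?A \<noteq> {}" and B: "finite (card ` ?B)" "card ` ?B \<noteq> {}"
    using independent_set_sizes_finite_nonempty[OF finite_Diff[OF assms(1)]] by blast+
  have "finite S \<and> v \<notin> S" if "S \<in> ?B" for S
    using that assms(1) by (auto simp: independent_def dest: finite_subset)
  then have "card (insert v S) = Suc (card S)" if "S \<in> ?B" for S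
    using that by simp
  then have "card ` insert v ` ?B = Suc ` card ` ?B"
    unfolding image_image by (intro image_cong refl)
  then have "card ` {S. independent V E S} = card ` ?A \<union> Suc ` card ` ?B"
    unfolding independent_sets_delete_vertex[OF assms(2,3)] image_Un by simp
  then show ?thesis
    using A B by (simp add: indep_number_def Max_Un mono_Max_commute[of Suc, symmetric] mono_Suc)
qed

lemma indep_number_mono:
  assumes "finite V'" "V \<subseteq> V'" "{} \<notin> E"
  shows "indep_number V E \<le> indep_number V' E"
proof -
  have "finite V" using assms(1,2) by (rule finite_subset[rotated])
  then have "indep_number V E \<in> card ` {S. independent V E S}"
    unfolding indep_number_def by (intro Max_in independent_set_sizes_finite_nonempty assms(3))
  then obtain S where "indep_number V E = card S" "S \<in> {S. independent V E S}"
    by (rule imageE)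
  moreover from this have "independent V' E S" using assms(2) by (auto simp: independent_def)
  ultimately show ?thesis using card_le_indep_number[OF assms(1)] by simp
qed

section \<open>The cone over a set of vertices\<close>

lemma independent_Some_image_iff:
  "independent (Some ` U) (susp_E E C) (Some ` T) \<longleftrightarrow> independent U E T"
proof -
  have cone: "\<not> {None, Some c} \<subseteq> Some ` T" for c by simp
  have "(\<forall>e\<in>susp_E E C. \<not> e \<subseteq> Some ` T) \<longleftrightarrow> (\<forall>e\<in>E. \<not> Some ` e \<subseteq> Some ` T)"
    unfolding susp_E_def using cone by blast
  also have "\<dots> \<longleftrightarrow> (\<forall>e\<in>E. \<not> e \<subseteq> T)" by (simp add: inj_image_subset_iff)
  finally show ?thesis by (simp add: independent_def inj_image_subset_iff)
qed

lemma independent_sets_Some_image: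
  "{S. independent (Some ` U) (susp_E E C) S} = image Some ` {T. independent U E T}"
proof (intro equalityI subsetI)
  fix S assume "S \<in> {S. independent (Some ` U) (susp_E E C) S}"
  then have S: "independent (Some ` U) (susp_E E C) S" by simp
  then have "S \<subseteq> Some ` U" by (simp add: independent_def)
  then obtain T where T: "S = Some ` T" unfolding subset_image_iff by blast
  with S have "T \<in> {T. independent U E T}" by (simp add: independent_Some_image_iff)
  then have "Some ` T \<in> image Some ` {T. independent U E T}" by (rule imageI)
  then show "S \<in> image Some ` {T. independent U E T}" using T by simp
next
  fix S assume "S \<in> image Some ` {T. independent U E T}"
  then obtain T where "S = Some ` T" "T \<in> {T. independent U E T}" by (rule imageE)
  then show "S \<in> {S. independent (Some ` U) (susp_E E C) S}"
    by (simp add: independent_Some_image_iff)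
qed

lemma indep_poly_Some_image: "indep_poly (Some ` U) (susp_E E C) x = indep_poly U E x"
proof -
  have inj: "inj_on (image Some) {T. independent U E T}"
    by (rule inj_onI) (simp add: inj_image_eq_iff)
  show ?thesis
    unfolding indep_poly_def independent_sets_Some_image sum.reindex[OF inj] comp_def
    by (simp add: card_image)
qed

lemma indep_number_Some_image: "indep_number (Some ` U) (susp_E E C) = indep_number U E"
  unfolding indep_number_def independent_sets_Some_image image_image by (simp add: card_image)

lemma susp_V_delete_None: "susp_V V - {None} = Some ` V"
  by (auto simp: susp_V_def)

lemma susp_V_delete_cone_vertex:
  "susp_V V - insert None {u. {None, u} \<in> susp_E E C} = Some ` (V - C)"
proof -
  have "{u. {None, u} \<in> susp_E E C} = Some ` C"
  proof (intro equalityI subsetI)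
    fix u assume u: "u \<in> {u. {None, u} \<in> susp_E E C}"
    have "{None, u} \<notin> (\<lambda>e. Some ` e) ` E" by auto
    with u obtain c where "c \<in> C" "{None, u} = {None, Some c}" by (auto simp: susp_E_def)
    then show "u \<in> Some ` C" by (auto simp: doubleton_eq_iff)
  next
    fix u assume "u \<in> Some ` C"
    then show "u \<in> {u. {None, u} \<in> susp_E E C}" by (auto simp: susp_E_def)
  qed
  then show ?thesis by (auto simp: susp_V_def)
qed

lemma card_susp_E: "\<forall>e\<in>E. card e = 2 \<Longrightarrow> \<forall>e\<in>susp_E E C. card e = 2"
  by (auto simp: susp_E_def card_image)

lemma indep_poly_susp:
  assumes "finite V" "\<forall>e\<in>E. card e = 2"
  shows "indep_poly (susp_V V) (susp_E E C) x = indep_poly V E x + x * indep_poly (V - C) E x"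
proof -
  have "indep_poly (susp_V V) (susp_E E C) x = indep_poly (susp_V V - {None}) (susp_E E C) x +
      x * indep_poly (susp_V V - insert None {u. {None, u} \<in> susp_E E C}) (susp_E E C) x"
    by (rule indep_poly_delete_vertex) (use assms in \<open>simp_all add: susp_V_def card_susp_E\<close>)
  then show ?thesis
    by (simp only: susp_V_delete_None susp_V_delete_cone_vertex indep_poly_Some_image)
qed

lemma indep_number_susp:
  assumes "finite V" "\<forall>e\<in>E. card e = 2"
  shows "indep_number (susp_V V) (susp_E E C) = max (indep_number V E) (Suc (indep_number (V - C) E))"
proof -
  have "indep_number (susp_V V) (susp_E E C) = max (indep_number (susp_V V - {None}) (susp_E E C))
      (Suc (indep_number (susp_V V - insert None {u. {None, u} \<in> susp_E E C}) (susp_E E C)))"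
    by (rule indep_number_delete_vertex) (use assms in \<open>simp_all add: susp_V_def card_susp_E\<close>)
  then show ?thesis
    by (simp only: susp_V_delete_None susp_V_delete_cone_vertex indep_number_Some_image)
qed

section \<open>Paths\<close>

text \<open>The infinite path on the naturals induces P_n on {1..n}; unlike P_n it does not depend on n,
  which the inductions below need.\<close>

definition succ_edges :: "nat set set" where
  "succ_edges = range (\<lambda>i. {i, Suc i})"

lemma card_succ_edges: "\<forall>e\<in>succ_edges. card e = 2"
  by (auto simp: succ_edges_def)

lemma empty_notin_succ_edges: "{} \<notin> succ_edges"
  by (auto simp: succ_edges_def)

lemma independent_succ_edges_iff: "independent U succ_edges S \<longleftrightarrow> S \<subseteq> U \<and> (\<forall>i\<in>S. Suc i \<notin> S)"
  by (auto simp: independent_def succ_edges_def)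

lemma independent_path_E:
  assumes "U \<subseteq> {1..n}"
  shows "independent U (path_E n) = independent U succ_edges"
proof
  fix S
  have "(\<forall>e\<in>path_E n. \<not> e \<subseteq> S) \<longleftrightarrow> (\<forall>i\<in>S. Suc i \<notin> S)" if "S \<subseteq> U"
  proof
    assume no_edge: "\<forall>e\<in>path_E n. \<not> e \<subseteq> S"
    show "\<forall>i\<in>S. Suc i \<notin> S"
    proof (intro ballI notI)
      fix i assume "i \<in> S" "Suc i \<in> S"
      then have "1 \<le> i" "i < n" using that assms by auto
      then have "{i, i + 1} \<in> path_E n" unfolding path_E_def by blast
      then show False using no_edge \<open>i \<in> S\<close> \<open>Suc i \<in> S\<close> by auto
    qed
  qed (auto simp: path_E_def)
  then show "independent U (path_E n) S = independent U succ_edges S"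
    unfolding independent_succ_edges_iff by (auto simp: independent_def)
qed

lemma indep_poly_path_E: "U \<subseteq> {1..n} \<Longrightarrow> indep_poly U (path_E n) x = indep_poly U succ_edges x"
  by (simp add: indep_poly_def independent_path_E)

lemma indep_number_path_E: "U \<subseteq> {1..n} \<Longrightarrow> indep_number U (path_E n) = indep_number U succ_edges"
  by (simp add: indep_number_def independent_path_E)

lemma succ_edges_delete_closed_nbhd:
  assumes "Suc m \<notin> U"
  shows "U - insert m {u. {m, u} \<in> succ_edges} = U - {m, m - 1}"
proof -
  have "{u. {m, u} \<in> succ_edges} = {Suc m} \<union> {u. Suc u = m}"
  proof (intro equalityI subsetI)
    fix u assume "u \<in> {u. {m, u} \<in> succ_edges}"
    then obtain i where "{m, u} = {i, Suc i}" unfolding succ_edges_def by blast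
    then show "u \<in> {Suc m} \<union> {u. Suc u = m}" by (auto simp: doubleton_eq_iff)
  next
    fix u assume "u \<in> {Suc m} \<union> {u. Suc u = m}"
    then have "{m, u} = {m, Suc m} \<or> {m, u} = {u, Suc u}" by auto
    then show "u \<in> {u. {m, u} \<in> succ_edges}" unfolding succ_edges_def by blast
  qed
  moreover have "x \<noteq> Suc m" if "x \<in> U" for x using that assms by blast
  moreover have "x \<noteq> m \<and> Suc x \<noteq> m \<longleftrightarrow> x \<noteq> m \<and> x \<noteq> m - 1" for x by arith
  ultimately show ?thesis by blast
qed

lemma indep_poly_succ_edges_delete_max:
  assumes "finite U" "m \<in> U" "Suc m \<notin> U"
  shows "indep_poly U succ_edges x =
    indep_poly (U - {m}) succ_edges x + x * indep_poly (U - {m, m - 1}) succ_edges x"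
  using indep_poly_delete_vertex[OF assms(1) card_succ_edges assms(2)]
  by (simp add: succ_edges_delete_closed_nbhd assms(3))

lemma indep_number_succ_edges_delete_max:
  assumes "finite U" "m \<in> U" "Suc m \<notin> U"
  shows "indep_number U succ_edges =
    max (indep_number (U - {m}) succ_edges) (Suc (indep_number (U - {m, m - 1}) succ_edges))"
  using indep_number_delete_vertex[OF assms(1) card_succ_edges assms(2)]
  by (simp add: succ_edges_delete_closed_nbhd assms(3))

lemma
  assumes "finite U" "m \<notin> U" "Suc m \<notin> U" "m - 1 \<notin> U"
  shows indep_poly_succ_edges_insert_isolated:
      "indep_poly (insert m U) succ_edges x = (1 + x) * indep_poly U succ_edges x"
    and indep_number_succ_edges_insert_isolated:
      "indep_number (insert m U) succ_edges = Suc (indep_number U succ_edges)"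
proof -
  have "insert m U - {m} = U" "insert m U - {m, m - 1} = U" using assms by auto
  then show "indep_poly (insert m U) succ_edges x = (1 + x) * indep_poly U succ_edges x"
      "indep_number (insert m U) succ_edges = Suc (indep_number U succ_edges)"
    using indep_poly_succ_edges_delete_max[of "insert m U" m x]
      indep_number_succ_edges_delete_max[of "insert m U" m] assms
    by (simp_all add: algebra_simps)
qed

lemma
  assumes "finite U" "m \<notin> U" "Suc m \<notin> U" "m - 1 \<notin> U" "Suc (Suc m) \<notin> U"
  shows indep_poly_succ_edges_insert_edge:
      "indep_poly (insert (Suc m) (insert m U)) succ_edges x = (1 + 2 * x) * indep_poly U succ_edges x"
    and indep_number_succ_edges_insert_edge:
      "indep_number (insert (Suc m) (insert m U)) succ_edges = Suc (indep_number U succ_edges)"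
proof -
  let ?U = "insert (Suc m) (insert m U)"
  have "?U - {Suc m} = insert m U" "?U - {Suc m, Suc m - 1} = U" using assms by auto
  then show "indep_poly ?U succ_edges x = (1 + 2 * x) * indep_poly U succ_edges x"
      "indep_number ?U succ_edges = Suc (indep_number U succ_edges)"
    using indep_poly_succ_edges_delete_max[of ?U "Suc m" x]
      indep_number_succ_edges_delete_max[of ?U "Suc m"] assms
      indep_poly_succ_edges_insert_isolated[of U m x] indep_number_succ_edges_insert_isolated[of U m]
    by (simp_all add: algebra_simps)
qed

definition path_indep_neg_one :: "nat \<Rightarrow> int" where
  "path_indep_neg_one n = (if n mod 6 \<in> {0, 5} then 1 else if n mod 6 \<in> {2, 3} then -1 else 0)"

lemma path_indep_neg_one_Suc_Suc:
  "path_indep_neg_one (Suc (Suc n)) = path_indep_neg_one (Suc n) - path_indep_neg_one n"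
proof -
  have "n mod 6 < 6" by simp
  then consider "n mod 6 = 0" | "n mod 6 = 1" | "n mod 6 = 2" | "n mod 6 = 3" | "n mod 6 = 4" | "n mod 6 = 5"
    by linarith
  then show ?thesis unfolding path_indep_neg_one_def by cases (simp_all add: mod_Suc)
qed

lemma interval_delete_max:
  "{1..Suc (Suc n)} - {Suc (Suc n)} = {1..Suc n}" "{1..Suc (Suc n)} - {Suc (Suc n), Suc (Suc n) - 1} = {1..n}"
  by auto

lemma indep_poly_interval_neg_one: "indep_poly {1..n} succ_edges (-1::int) = path_indep_neg_one n"
proof (induction n rule: induct_nat_012)
  case 0
  show ?case by (simp add: indep_poly_empty empty_notin_succ_edges path_indep_neg_one_def)
next
  case 1
  show ?case
    using indep_poly_succ_edges_insert_isolated[of "{}" 1 "-1::int"] by (simp add: path_indep_neg_one_def)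
next
  case (ge2 n)
  then show ?case
    using indep_poly_succ_edges_delete_max[of "{1..Suc (Suc n)}" "Suc (Suc n)" "-1::int"]
    unfolding interval_delete_max by (simp add: path_indep_neg_one_Suc_Suc)
qed

lemma indep_number_interval: "indep_number {1..n} succ_edges = (n + 1) div 2"
proof (induction n rule: induct_nat_012)
  case 0
  show ?case by (simp add: indep_number_empty empty_notin_succ_edges)
next
  case 1
  show ?case
    using indep_number_succ_edges_insert_isolated[of "{}" 1] by (simp add: indep_number_empty empty_notin_succ_edges)
next
  case (ge2 n)
  have "max ((n + 2) div 2) (Suc ((n + 1) div 2)) = (n + 3) div 2" by presburger
  with ge2 show ?case
    using indep_number_succ_edges_delete_max[of "{1..Suc (Suc n)}" "Suc (Suc n)"]
    unfolding interval_delete_max by simp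
qed

section \<open>Maximal independent sets of paths\<close>

definition path_maximal_independent :: "nat \<Rightarrow> nat set \<Rightarrow> bool" where
  "path_maximal_independent n C \<longleftrightarrow> C \<subseteq> {1..n} \<and> (\<forall>i\<in>C. Suc i \<notin> C) \<and>
     (\<forall>i\<in>{1..n}. i \<in> C \<or> i - 1 \<in> C \<or> Suc i \<in> C)"

lemma path_maximal_independentI:
  assumes "maximal_independent (path_V n) (path_E n) C"
  shows "path_maximal_independent n C"
proof -
  have indep: "independent (path_V n) (path_E n) S \<longleftrightarrow> S \<subseteq> {1..n} \<and> (\<forall>i\<in>S. Suc i \<notin> S)" for S
    by (simp add: path_V_def independent_path_E independent_succ_edges_iff)
  have C: "C \<subseteq> {1..n}" "\<forall>i\<in>C. Suc i \<notin> C"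
    using assms by (simp_all add: maximal_independent_def indep)
  have maximal: "\<forall>S. independent (path_V n) (path_E n) S \<and> C \<subseteq> S \<longrightarrow> S = C"
    using assms by (simp add: maximal_independent_def)
  have "i \<in> C \<or> i - 1 \<in> C \<or> Suc i \<in> C" if "i \<in> {1..n}" for i
  proof (rule ccontr)
    assume not_dominated: "\<not> (i \<in> C \<or> i - 1 \<in> C \<or> Suc i \<in> C)"
    then have "independent (path_V n) (path_E n) (insert i C)"
      using that C by (auto simp: indep)
    then have "insert i C = C" using maximal subset_insertI by blast
    then show False using not_dominated by blast
  qed
  then show ?thesis using C by (simp add: path_maximal_independent_def)
qed

lemma path_maximal_independent_truncate:
  assumes "path_maximal_independent n C" "m \<in> C"
  shows "path_maximal_independent m (C \<inter> {..m})"
proof -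
  have C: "C \<subseteq> {1..n}" "\<forall>i\<in>C. Suc i \<notin> C"
    and dom: "\<forall>i\<in>{1..n}. i \<in> C \<or> i - 1 \<in> C \<or> Suc i \<in> C"
    using assms(1) by (simp_all add: path_maximal_independent_def)
  have "m \<le> n" using C assms(2) by auto
  have "i \<in> C \<inter> {..m} \<or> i - 1 \<in> C \<inter> {..m} \<or> Suc i \<in> C \<inter> {..m}" if "i \<in> {1..m}" for i
  proof (cases "i = m")
    case False
    have "i \<in> C \<or> i - 1 \<in> C \<or> Suc i \<in> C" using bspec[OF dom, of i] that \<open>m \<le> n\<close> by simp
    then show ?thesis using that False by auto
  qed (simp add: assms(2))
  then show ?thesis using C by (auto simp: path_maximal_independent_def)
qed

text \<open>Consecutive elements of a maximal independent set of a path are two or three apart, and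
  its last element is n or n - 1.\<close>

lemma path_maximal_independent_induct [consumes 2, case_names one two extend gap2 gap3]:
  assumes "path_maximal_independent n C" "n \<ge> 1"
    and "P 1 {1}"
    and "P 2 {2}"
    and "\<And>n C. path_maximal_independent n C \<Longrightarrow> n \<in> C \<Longrightarrow> P n C \<Longrightarrow> P (Suc n) C"
    and "\<And>n C. path_maximal_independent n C \<Longrightarrow> n \<in> C \<Longrightarrow> P n C \<Longrightarrow> P (n + 2) (insert (n + 2) C)"
    and "\<And>n C. path_maximal_independent n C \<Longrightarrow> n \<in> C \<Longrightarrow> P n C \<Longrightarrow> P (n + 3) (insert (n + 3) C)"
  shows "P n C"
  using assms(1,2)
proof (induction n arbitrary: C rule: less_induct)
  case (less n)
  have C: "C \<subseteq> {1..n}" and indep: "\<forall>i\<in>C. Suc i \<notin> C"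
    and dom: "\<forall>i\<in>{1..n}. i \<in> C \<or> i - 1 \<in> C \<or> Suc i \<in> C"
    using less.prems(1) by (simp_all add: path_maximal_independent_def)
  have step: "path_maximal_independent k (C \<inter> {..k}) \<and> k \<in> C \<inter> {..k} \<and> P k (C \<inter> {..k})"
    if "k \<in> C" "k < n" for k
  proof -
    have trunc: "path_maximal_independent k (C \<inter> {..k})"
      using less.prems(1) that(1) by (rule path_maximal_independent_truncate)
    moreover have "1 \<le> k" using C that(1) by auto
    ultimately show ?thesis using less.IH[OF that(2) trunc] that(1) by simp
  qed
  show ?case
  proof (cases "n \<in> C")
    case False
    have "n \<in> C \<or> n - 1 \<in> C \<or> Suc n \<in> C" using bspec[OF dom, of n] less.prems(2) by simp
    moreover have "Suc n \<notin> C" using C by auto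
    ultimately have "n - 1 \<in> C" using False by blast
    obtain k where n: "n = Suc k" using less.prems(2) by (cases n) auto
    with \<open>n - 1 \<in> C\<close> have "k \<in> C" by simp
    have "C \<subseteq> {..k}"
    proof
      fix x assume "x \<in> C"
      then have "x \<le> n" "x \<noteq> n" using C False by auto
      then show "x \<in> {..k}" using n by simp
    qed
    then have "C \<inter> {..k} = C" by (rule Int_absorb2)
    moreover have "P (Suc k) (C \<inter> {..k})"
      using step[of k] \<open>k \<in> C\<close> n by (intro assms(5)) simp_all
    ultimately show ?thesis using n by simp
  next
    case True
    consider "n = 1" | "n = 2" | "n \<ge> 3" using less.prems(2) by linarith
    then show ?thesis
    proof cases
      case 1
      then have "C = {1}" using C True by auto
      then show ?thesis using 1 assms(3) by simp
    next
      case 2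
      then have "1 \<notin> C" using bspec[OF indep, of 1] True by (auto simp: numeral_2_eq_2)
      have "x = 2" if "x \<in> C" for x
      proof -
        have "1 \<le> x" "x \<le> 2" using that C 2 by auto
        then show "x = 2" using that \<open>1 \<notin> C\<close> by (cases "x = 1") auto
      qed
      then have "C = {2}" using True 2 by blast
      then show ?thesis using 2 assms(4) by simp
    next
      case 3
      obtain k where n: "n = k + 3" using 3 by (metis add.commute le_Suc_ex)
      have "k + 2 \<notin> C"
      proof
        assume "k + 2 \<in> C"
        then have "Suc (k + 2) \<notin> C" using indep by blast
        then show False using True n by (simp add: numeral_2_eq_2 numeral_3_eq_3)
      qed
      moreover have "k + 1 \<in> C \<or> k + 1 - 1 \<in> C \<or> Suc (k + 1) \<in> C"
        using bspec[OF dom, of "k + 1"] n by simp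
      ultimately have "k + 1 \<in> C \<or> k \<in> C" by (simp add: numeral_2_eq_2)
      have below: "x = k + 3 \<or> x \<le> k + 1" if "x \<in> C" for x
      proof -
        have "x \<le> k + 3" using that C n by auto
        then show ?thesis using that \<open>k + 2 \<notin> C\<close> by (cases "x = k + 2") auto
      qed
      from \<open>k + 1 \<in> C \<or> k \<in> C\<close> show ?thesis
      proof
        assume "k + 1 \<in> C"
        have "insert (k + 3) (C \<inter> {..k + 1}) = C"
          using below True n by auto
        moreover have "P (k + 1 + 2) (insert (k + 1 + 2) (C \<inter> {..k + 1}))"
          using step[of "k + 1"] \<open>k + 1 \<in> C\<close> n by (intro assms(6)) simp_all
        ultimately show ?thesis using n by (simp add: numeral_3_eq_3)
      next
        assume "k \<in> C"
        then have "k + 1 \<notin> C" using indep by auto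
        then have "x = k + 3 \<or> x \<le> k" if "x \<in> C" for x
          using below[OF that] that by (cases "x = k + 1") auto
        then have "insert (k + 3) (C \<inter> {..k}) = C"
          using True n by auto
        moreover have "P (k + 3) (insert (k + 3) (C \<inter> {..k}))"
          using step[of k] \<open>k \<in> C\<close> n by (intro assms(7)) simp_all
        ultimately show ?thesis using n by simp
      qed
    qed
  qed
qed

lemma path_complement_insert:
  assumes "C \<subseteq> {1..n}"
  shows "{1..Suc n} - C = insert (Suc n) ({1..n} - C)"
    and "{1..n + 2} - insert (n + 2) C = insert (Suc n) ({1..n} - C)"
    and "{1..n + 3} - insert (n + 3) C = insert (Suc (Suc n)) (insert (Suc n) ({1..n} - C))"
  using assms by auto

lemma indep_number_path_complement:
  assumes "path_maximal_independent n C" "n \<ge> 1"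
  shows "Suc (indep_number ({1..n} - C) succ_edges) =
    card C + ((if 1 \<in> C then 0 else 1) + (if n \<in> C then 0 else 1))"
  using assms
proof (induction rule: path_maximal_independent_induct)
  case one
  then show ?case by (simp add: indep_number_empty empty_notin_succ_edges)
next
  case two
  have "{1..2::nat} - {2} = insert 1 {}" by auto
  then show ?case
    using indep_number_succ_edges_insert_isolated[of "{}" 1]
    by (simp add: indep_number_empty empty_notin_succ_edges)
next
  case (extend n C)
  then have C: "C \<subseteq> {1..n}" "finite C" by (auto simp: path_maximal_independent_def finite_subset)
  then have "Suc n \<notin> C" by auto
  with C show ?case
    unfolding path_complement_insert(1)[OF C(1)]
    using extend indep_number_succ_edges_insert_isolated[of "{1..n} - C" "Suc n"] by simp
next
  case (gap2 n C)
  then have C: "C \<subseteq> {1..n}" "finite C" "n \<ge> 1" by (auto simp: path_maximal_independent_def finite_subset)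
  then have "n + 2 \<notin> C" by auto
  with C show ?case
    unfolding path_complement_insert(2)[OF C(1)]
    using gap2 indep_number_succ_edges_insert_isolated[of "{1..n} - C" "Suc n"] by simp
next
  case (gap3 n C)
  then have C: "C \<subseteq> {1..n}" "finite C" "n \<ge> 1" by (auto simp: path_maximal_independent_def finite_subset)
  then have "n + 3 \<notin> C" by auto
  with C show ?case
    unfolding path_complement_insert(3)[OF C(1)]
    using gap3 indep_number_succ_edges_insert_edge[of "{1..n} - C" "Suc n"] by simp
qed

lemma card_one_mod_three: "card {i. 1 \<le> i \<and> i \<le> n \<and> i mod 3 = (1::nat)} = (n + 2) div 3"
proof (induction n)
  case (Suc n)
  let ?S = "\<lambda>n. {i::nat. 1 \<le> i \<and> i \<le> n \<and> i mod 3 = 1}"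
  have "finite (?S n)" by (rule finite_subset[of _ "{..n}"]) auto
  show ?case
  proof (cases "Suc n mod 3 = 1")
    case True
    then have "?S (Suc n) = insert (Suc n) (?S n)" by (auto simp: le_Suc_eq)
    moreover have "(Suc n + 2) div 3 = Suc ((n + 2) div 3)" using True by presburger
    ultimately show ?thesis using Suc \<open>finite (?S n)\<close> by simp
  next
    case False
    then have "?S (Suc n) = ?S n" by (auto simp: le_Suc_eq)
    moreover have "(Suc n + 2) div 3 = (n + 2) div 3" using False by presburger
    ultimately show ?thesis using Suc by simp
  qed
qed simp

lemma indep_poly_path_complement:
  assumes "path_maximal_independent n C" "n \<ge> 1"
  shows "indep_poly ({1..n} - C) succ_edges (-1::int) =
    (if n mod 3 = 1 \<and> C = {i. 1 \<le> i \<and> i \<le> n \<and> i mod 3 = 1} then (-1) ^ ((n - 1) div 3) else 0)"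
  using assms
proof (induction rule: path_maximal_independent_induct)
  case one
  have "{i::nat. 1 \<le> i \<and> i \<le> 1 \<and> i mod 3 = 1} = {1}" by auto
  then show ?case by (simp add: indep_poly_empty empty_notin_succ_edges)
next
  case two
  have "{1..2::nat} - {2} = insert 1 {}" by auto
  then show ?case using indep_poly_succ_edges_insert_isolated[of "{}" 1 "-1::int"] by simp
next
  case (extend n C)
  then have C: "C \<subseteq> {1..n}" by (simp add: path_maximal_independent_def)
  have not_special: "\<not> (Suc n mod 3 = 1 \<and> C = {i. 1 \<le> i \<and> i \<le> Suc n \<and> i mod 3 = 1})"
    using C by auto
  show ?case
    unfolding if_not_P[OF not_special] path_complement_insert(1)[OF C]
    using extend indep_poly_succ_edges_insert_isolated[of "{1..n} - C" "Suc n" "-1::int"] C by simp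
next
  case (gap2 n C)
  then have C: "C \<subseteq> {1..n}" by (simp add: path_maximal_independent_def)
  have "\<not> (n mod 3 = 1 \<and> (n + 2) mod 3 = 1)" by presburger
  then have not_special:
      "\<not> ((n + 2) mod 3 = 1 \<and> insert (n + 2) C = {i. 1 \<le> i \<and> i \<le> n + 2 \<and> i mod 3 = 1})"
    using gap2 by auto
  show ?case
    unfolding if_not_P[OF not_special] path_complement_insert(2)[OF C]
    using gap2 indep_poly_succ_edges_insert_isolated[of "{1..n} - C" "Suc n" "-1::int"] C by simp
next
  case (gap3 n C)
  then have C: "C \<subseteq> {1..n}" "n \<ge> 1" by (auto simp: path_maximal_independent_def)
  let ?S = "\<lambda>n. {i::nat. 1 \<le> i \<and> i \<le> n \<and> i mod 3 = 1}"
  have cond: "(n + 3) mod 3 = 1 \<and> insert (n + 3) C = {i. 1 \<le> i \<and> i \<le> n + 3 \<and> i mod 3 = 1}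
      \<longleftrightarrow> n mod 3 = 1 \<and> C = {i. 1 \<le> i \<and> i \<le> n \<and> i mod 3 = 1}"
  proof (cases "n mod 3 = 1")
    case True
    have "x \<le> n" if "x \<le> n + 3" "x mod 3 = 1" "x \<noteq> n + 3" for x
      using that True by presburger
    then have "?S (n + 3) = insert (n + 3) (?S n)" using True by auto
    moreover have "insert (n + 3) C = insert (n + 3) (?S n) \<longleftrightarrow> C = ?S n"
      using C by (intro insert_ident) auto
    ultimately show ?thesis using True by simp
  qed simp
  have "(n + 3 - 1) div 3 = Suc ((n - 1) div 3)" using C by simp
  then show ?case
    unfolding cond path_complement_insert(3)[OF C(1)]
    using gap3 indep_poly_succ_edges_insert_edge[of "{1..n} - C" "Suc n" "-1::int"] C by simp
qed

section \<open>The suspension of a path\<close>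

lemma card_path_E: "\<forall>e\<in>path_E n. card e = 2"
  by (auto simp: path_E_def)

lemma indep_number_susp_path:
  assumes "path_maximal_independent n C" "n \<ge> 1"
  shows "indep_number (susp_V {1..n}) (susp_E (path_E n) C) =
    max ((n + 1) div 2) (card C + ((if 1 \<in> C then 0 else 1) + (if n \<in> C then 0 else 1)))"
proof -
  have "indep_number (susp_V {1..n}) (susp_E (path_E n) C) =
      max (indep_number {1..n} (path_E n)) (Suc (indep_number ({1..n} - C) (path_E n)))"
    using card_path_E by (intro indep_number_susp) simp_all
  then show ?thesis
    unfolding indep_number_path_E[OF order_refl] indep_number_path_E[OF Diff_subset]
      indep_number_interval indep_number_path_complement[OF assms] .
qed

lemma indep_poly_susp_path:
  assumes "path_maximal_independent n C" "n \<ge> 1"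
  shows "indep_poly (susp_V {1..n}) (susp_E (path_E n) C) (-1::int) = path_indep_neg_one n -
    (if n mod 3 = 1 \<and> C = {i. 1 \<le> i \<and> i \<le> n \<and> i mod 3 = 1} then (-1) ^ ((n - 1) div 3) else 0)"
proof -
  have "indep_poly (susp_V {1..n}) (susp_E (path_E n) C) (-1::int) =
      indep_poly {1..n} (path_E n) (-1) + (-1) * indep_poly ({1..n} - C) (path_E n) (-1)"
    using card_path_E by (intro indep_poly_susp) simp_all
  then show ?thesis
    unfolding indep_poly_path_E[OF order_refl] indep_poly_path_E[OF Diff_subset]
      indep_poly_interval_neg_one indep_poly_path_complement[OF assms]
    by simp
qed

lemma card_path_maximal_independent_le:
  assumes "path_maximal_independent n C" "n \<ge> 1"
  shows "card C + ((if 1 \<in> C then 0 else 1) + (if n \<in> C then 0 else 1)) \<le> (n + 1) div 2 + 1"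
proof -
  define \<delta> :: nat where "\<delta> = (if 1 \<in> C then 0 else 1) + (if n \<in> C then 0 else 1)"
  have "Suc (indep_number ({1..n} - C) succ_edges) = card C + \<delta>"
    using indep_number_path_complement[OF assms] by (simp add: \<delta>_def)
  moreover have "indep_number ({1..n} - C) succ_edges \<le> indep_number {1..n} succ_edges"
    by (rule indep_number_mono) (auto simp: empty_notin_succ_edges)
  ultimately have "card C + \<delta> \<le> (n + 1) div 2 + 1"
    unfolding indep_number_interval by simp
  then show ?thesis by (simp add: \<delta>_def)
qed

lemma card_one_mod_three_ends:
  assumes "n \<ge> 1" "n mod 3 = 1" "C = {i. 1 \<le> i \<and> i \<le> n \<and> i mod 3 = 1}"
  shows "card C + ((if 1 \<in> C then 0 else 1) + (if n \<in> C then 0 else 1)) = (n + 2) div 3"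
proof -
  have "card C = (n + 2) div 3" unfolding assms(3) by (rule card_one_mod_three)
  moreover have "1 \<in> C" "n \<in> C" using assms by simp_all
  ultimately show ?thesis by simp
qed

section \<open>The residue condition\<close>

lemma sign_condition_iff_residue:
  fixes n k :: nat
  assumes k_le: "k \<le> (n + 1) div 2 + 1"
    and special: "s \<Longrightarrow> n mod 3 = 1 \<and> k = (n + 2) div 3"
  shows "(-1::int) ^ max ((n + 1) div 2) k * (path_indep_neg_one n - (if s then (-1) ^ ((n - 1) div 3) else 0)) = 1
    \<longleftrightarrow> (n mod 12 \<in> {0, 2, 9, 11} \<and> k \<le> (n + 1) div 2)
      \<or> (n mod 12 \<in> {3, 5, 6, 8} \<and> k = (n + 1) div 2 + 1)
      \<or> (n mod 12 \<in> {1, 4} \<and> s)"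
proof -
  define r where "r = n mod 12"
  have "even ((n + 1) div 2) \<longleftrightarrow> even ((r + 1) div 2)"
    unfolding r_def by presburger
  then have half: "(-1::int) ^ ((n + 1) div 2) = (-1) ^ ((r + 1) div 2)"
    by (simp add: minus_one_power_iff)
  have "even ((n - 1) div 3) \<longleftrightarrow> even ((r - 1) div 3)" if "n mod 3 = 1"
    using that unfolding r_def by presburger
  then have third: "(-1::int) ^ ((n - 1) div 3) = (-1) ^ ((r - 1) div 3)" if s
    using that special by (simp add: minus_one_power_iff)
  have path: "path_indep_neg_one n = path_indep_neg_one r"
    by (simp add: path_indep_neg_one_def r_def mod_mod_cancel)
  have "s \<Longrightarrow> r mod 3 = 1"
    using special by (simp add: r_def mod_mod_cancel)
  have "(n + 2) div 3 \<le> (n + 1) div 2" by presburger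
  then have "max ((n + 1) div 2) k = (n + 1) div 2 + (if k \<le> (n + 1) div 2 then 0 else 1)"
    and "s \<Longrightarrow> k \<le> (n + 1) div 2"
    using k_le special by auto
  moreover have "r = 0 \<or> r = 1 \<or> r = 2 \<or> r = 3 \<or> r = 4 \<or> r = 5 \<or> r = 6 \<or> r = 7 \<or> r = 8 \<or> r = 9 \<or>
      r = 10 \<or> r = 11"
    unfolding r_def by presburger
  ultimately show ?thesis
    using half third path \<open>s \<Longrightarrow> r mod 3 = 1\<close> k_le unfolding r_def[symmetric]
    by (elim disjE) (auto simp: path_indep_neg_one_def power_add)
qed

theorem corollary7p4:
  fixes n :: nat and C :: "nat set"
  assumes "n \<ge> 2"
    and "maximal_independent (path_V n) (path_E n) C"
  shows "pseudo_gorenstein_star (susp_V (path_V n)) (susp_E (path_E n) C) \<longleftrightarrow>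
    (let \<alpha> = (n + 1) div 2;
         c = card C;
         \<delta> = (if 1 \<in> C then 0 else 1) + (if n \<in> C then 0 else 1)
     in (n mod 12 \<in> {0, 2, 9, 11} \<and> c + \<delta> \<le> \<alpha>)
      \<or> (n mod 12 \<in> {3, 5, 6, 8} \<and> c + \<delta> = \<alpha> + 1)
      \<or> (n mod 12 \<in> {1, 4} \<and> C = {i. 1 \<le> i \<and> i \<le> n \<and> i mod 3 = 1}))"
proof -
  define \<delta> :: nat where "\<delta> = (if 1 \<in> C then 0 else 1) + (if n \<in> C then 0 else 1)"
  define s where "s \<longleftrightarrow> n mod 3 = 1 \<and> C = {i. 1 \<le> i \<and> i \<le> n \<and> i mod 3 = 1}"
  have mis: "path_maximal_independent n C" and "n \<ge> 1"
    using assms by (simp_all add: path_maximal_independentI)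
  have bound: "card C + \<delta> \<le> (n + 1) div 2 + 1"
    unfolding \<delta>_def using mis \<open>n \<ge> 1\<close> by (rule card_path_maximal_independent_le)
  have special: "n mod 3 = 1 \<and> card C + \<delta> = (n + 2) div 3" if s
  proof -
    from that have "n mod 3 = 1" "C = {i. 1 \<le> i \<and> i \<le> n \<and> i mod 3 = 1}" by (simp_all add: s_def)
    then show ?thesis unfolding \<delta>_def using card_one_mod_three_ends[OF \<open>n \<ge> 1\<close>] by blast
  qed
  have "finite (susp_V {1..n})" by (simp add: susp_V_def)
  have pg: "pseudo_gorenstein_star (susp_V {1..n}) (susp_E (path_E n) C) \<longleftrightarrow>
      (n mod 12 \<in> {0, 2, 9, 11} \<and> card C + \<delta> \<le> (n + 1) div 2)
      \<or> (n mod 12 \<in> {3, 5, 6, 8} \<and> card C + \<delta> = (n + 1) div 2 + 1)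
      \<or> (n mod 12 \<in> {1, 4} \<and> s)"
    unfolding pseudo_gorenstein_star_iff[OF \<open>finite (susp_V {1..n})\<close>]
      indep_number_susp_path[OF mis \<open>n \<ge> 1\<close>] indep_poly_susp_path[OF mis \<open>n \<ge> 1\<close>]
      \<delta>_def[symmetric] s_def[symmetric]
    by (rule sign_condition_iff_residue[OF bound special])
  have "n mod 12 = 1 \<or> n mod 12 = 4 \<Longrightarrow> n mod 3 = 1" by presburger
  then show ?thesis
    unfolding path_V_def Let_def pg \<delta>_def[symmetric] by (auto simp: s_def)
qed

end
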